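(* Let $q$ be a prime power, $0<k<n$, and let $S$ be the set of subspaces $Y\in\mathcal{G}_q(n,k)$ whose Ferrers diagram is the full $k\times(n-k)$ diagram with $k(n-k)$ dots. Let $X\in\mathcal{G}_q(n,k)\setminus S$ with $\mathrm{RE}(X)=(X_n,\dots,X_1)$ and identifying vector $v(X)=(v_n,\dots,v_1)$, and let $\ell$ ($0\le\ell\le n-k-1$) be such that $v_1=\dots=v_\ell=0$ and $v_{\ell+1}=1$. Then the number $\Delta_X$ of subspaces $Y\in S$ with $X<Y$ in the extended-representation order equals \[\Delta_X=\sum_{i=1}^{\ell}\bigl(q^k-1-\{X_i\}\bigr)q^{k(n-k-i)}.\]
   Context: $\mathcal{G}_q(n,k)$ is the set of $k$-dimensional subspaces of $\mathbb{F}_q^n$; field elements are identified with $\mathbb{Z}_q=\{0,\dots,q-1\}$ (with $0\mapsto0,1\mapsto1$). $\mathrm{RE}(X)$ is the unique $k\times n$ reduced row echelon matrix whose rows span $X$, with columns labelled $X_n,\dots,X_1$ from left to right. $v(X)=(v_n,\dots,v_1)$ is binary with $v_i=1$ iff column $X_i$ contains a row's leading one. The Ferrers diagram of $X$ is obtained from $\mathrm{RE}(X)$ by deleting in each row the leading one and everything to its left, deleting columns containing leading ones, right-justifying and replacing entries by dots; it has $k(n-k)$ dots iff $v(X)$ consists of $k$ ones followed by $n-k$ zeros (i.e. $v_n=\dots=v_{n-k+1}=1$). $\mathrm{EXT}(X)$ is the $(k+1)\times n$ matrix with top row $v(X)$ above $\mathrm{RE}(X)$, its $i$-th column being $\binom{v_i}{X_i}$.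 For a $q$-ary column vector $y=(y_1,\dots,y_r)^T$, $\{y\}=\sum_t y_tq^{r-t}$. Order: $X<Y$ if, at the least index $i$ where the $i$-th columns of $\mathrm{EXT}(X)$ and $\mathrm{EXT}(Y)$ differ, $\{\binom{v(X)_i}{X_i}\}<\{\binom{v(Y)_i}{Y_i}\}$. *)

theory Defs
  imports Main "HOL-Library.Cardinality"
begin

text \<open>Vectors of F_q^n are functions nat => 'a indexed by the column labels 1..n
 (label n is the leftmost column, label 1 the rightmost); they vanish outside 1..n.
 A k x n matrix is a function M :: nat => nat => 'a, M r i = entry in row r (1..k),
 column with label i (1..n).\<close>

definition in_vecs :: "nat \<Rightarrow> (nat \<Rightarrow> 'a::field) \<Rightarrow> bool" where
  "in_vecs n w \<longleftrightarrow> (\<forall>i. (i = 0 \<or> n < i) \<longrightarrow> w i = 0)"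

definition rowspan :: "nat \<Rightarrow> (nat \<Rightarrow> nat \<Rightarrow> 'a::field) \<Rightarrow> (nat \<Rightarrow> 'a) set" where
  "rowspan k R = {w. \<exists>c. w = (\<lambda>i. \<Sum>r=1..k. c r * R r i)}"

definition lin_indep :: "nat \<Rightarrow> (nat \<Rightarrow> nat \<Rightarrow> 'a::field) \<Rightarrow> bool" where
  "lin_indep k R \<longleftrightarrow>
     (\<forall>c. (\<lambda>i. \<Sum>r=1..k. c r * R r i) = (\<lambda>_. 0) \<longrightarrow> (\<forall>r\<in>{1..k}. c r = 0))"

definition grass :: "nat \<Rightarrow> nat \<Rightarrow> (nat \<Rightarrow> 'a::field) set set" where
  "grass n k = {rowspan k R | R. (\<forall>r\<in>{1..k}. in_vecs n (R r)) \<and> lin_indep k R}"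

text \<open>Label of the leftmost nonzero entry of row r (= largest label).\<close>
definition lead :: "(nat \<Rightarrow> nat \<Rightarrow> 'a::field) \<Rightarrow> nat \<Rightarrow> nat" where
  "lead M r = Max {i. M r i \<noteq> 0}"

definition is_rref :: "nat \<Rightarrow> nat \<Rightarrow> (nat \<Rightarrow> nat \<Rightarrow> 'a::field) \<Rightarrow> bool" where
  "is_rref n k M \<longleftrightarrow>
     (\<forall>r. r \<notin> {1..k} \<longrightarrow> M r = (\<lambda>_. 0)) \<and>
     (\<forall>r\<in>{1..k}. in_vecs n (M r) \<and> M r \<noteq> (\<lambda>_. 0) \<and> M r (lead M r) = 1 \<and>
        (\<forall>r'\<in>{1..k}. r' \<noteq> r \<longrightarrow> M r' (lead M r) = 0)) \<and>
     (\<forall>r\<in>{1..k}. \<forall>r'\<in>{1..k}. r < r' \<longrightarrow> lead M r' < lead M r)"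

definition RE :: "nat \<Rightarrow> nat \<Rightarrow> (nat \<Rightarrow> 'a::field) set \<Rightarrow> nat \<Rightarrow> nat \<Rightarrow> 'a" where
  "RE n k X = (THE M. is_rref n k M \<and> rowspan k M = X)"

definition vX :: "nat \<Rightarrow> nat \<Rightarrow> (nat \<Rightarrow> 'a::field) set \<Rightarrow> nat \<Rightarrow> nat" where
  "vX n k X i = (if \<exists>r\<in>{1..k}. lead (RE n k X) r = i then 1 else 0)"

definition ferrers_dots :: "nat \<Rightarrow> nat \<Rightarrow> (nat \<Rightarrow> 'a::field) set \<Rightarrow> nat" where
  "ferrers_dots n k X =
     (\<Sum>r=1..k. card {i\<in>{1..n}. i < lead (RE n k X) r \<and> vX n k X i = 0})"

definition full_set :: "nat \<Rightarrow> nat \<Rightarrow> (nat \<Rightarrow> 'a::field) set set" where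
  "full_set n k = {Y \<in> grass n k. ferrers_dots n k Y = k * (n - k)}"

text \<open>{X_i}: value of the i-th column of RE(X), entries read via phi : F_q -> Z_q.\<close>
definition colval :: "('a::{finite,field} \<Rightarrow> nat) \<Rightarrow> nat \<Rightarrow> nat \<Rightarrow> (nat \<Rightarrow> 'a) set \<Rightarrow> nat \<Rightarrow> nat" where
  "colval phi n k X i = (\<Sum>t=1..k. phi (RE n k X t i) * CARD('a) ^ (k - t))"

text \<open>Value of the i-th column of EXT(X) (top entry v_i).\<close>
definition extval :: "('a::{finite,field} \<Rightarrow> nat) \<Rightarrow> nat \<Rightarrow> nat \<Rightarrow> (nat \<Rightarrow> 'a) set \<Rightarrow> nat \<Rightarrow> nat" where
  "extval phi n k X i = vX n k X i * CARD('a) ^ k + colval phi n k X i"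

definition ext_col_differ :: "nat \<Rightarrow> nat \<Rightarrow> (nat \<Rightarrow> 'a::field) set \<Rightarrow> (nat \<Rightarrow> 'a) set \<Rightarrow> nat \<Rightarrow> bool" where
  "ext_col_differ n k X Y i \<longleftrightarrow>
     vX n k X i \<noteq> vX n k Y i \<or> (\<exists>t\<in>{1..k}. RE n k X t i \<noteq> RE n k Y t i)"

definition ext_less :: "('a::{finite,field} \<Rightarrow> nat) \<Rightarrow> nat \<Rightarrow> nat \<Rightarrow> (nat \<Rightarrow> 'a) set \<Rightarrow> (nat \<Rightarrow> 'a) set \<Rightarrow> bool" where
  "ext_less phi n k X Y \<longleftrightarrow>
     (\<exists>i\<in>{1..n}. ext_col_differ n k X Y i \<and>
        (\<forall>j\<in>{1..n}. j < i \<longrightarrow> \<not> ext_col_differ n k X Y j) \<and>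
        extval phi n k X i < extval phi n k Y i)"

end

theory Submission
  imports Defs "HOL-Library.FuncSet"
begin

text \<open>
  A subspace Y lies in S iff the leading ones of RE(Y) sit in the columns n, ..., n - k + 1.
  Such an RREF is the identity block next to an arbitrary free k x (n - k) block in the columns
  n - k, ..., 1, so Y \<mapsto> (free block of RE(Y)) is a bijection from S onto all blocks.
  Because v(X) has a one in column l + 1 while v(Y) vanishes on the columns 1, ..., n - k, the
  comparison of EXT(X) with EXT(Y) is decided in one of the columns 1, ..., l, where it is the
  comparison of the column values. The blocks that agree with X in the columns 1, ..., i - 1 and
  beat it in column i number (q^k - 1 - {X_i}) q^(k(n-k-i)), and these sets are disjoint.

  RE(Y) is unique because the leading positions of an RREF are exactly the leading positions of
  the nonzero vectors in its row space. Existence is proved by counting: a k-dimensional subspace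
  V of F_q^n has q^k elements, restriction to the set P of leading positions of its nonzero
  vectors is injective on V, and vectors of V with distinct leading positions are independent;
  hence |P| = k and V contains, for each p in P, a vector that is 1 at p and 0 on the rest of P.
\<close>

section \<open>Leading positions and row spaces\<close>

definition leading_pos :: "(nat \<Rightarrow> 'a::zero) \<Rightarrow> nat" where
  "leading_pos w = Max {i. w i \<noteq> 0}"

lemma lead_eq_leading_pos: "lead M r = leading_pos (M r)"
  by (simp add: lead_def leading_pos_def)

lemma leading_pos_eqI:
  assumes "w p \<noteq> 0" and "\<forall>i>p. w i = 0"
  shows "leading_pos w = p"
proof -
  have sub: "{i. w i \<noteq> 0} \<subseteq> {..p}" using assms(2) by (auto simp: not_le[symmetric])
  hence "finite {i. w i \<noteq> 0}" by (rule finite_subset) simp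
  thus ?thesis unfolding leading_pos_def by (rule Max_eqI) (use sub assms(1) in auto)
qed

lemma in_vecs_support: "in_vecs n w \<Longrightarrow> {i. w i \<noteq> 0} \<subseteq> {1..n}"
proof
  fix i assume "in_vecs n w" and "i \<in> {i. w i \<noteq> 0}"
  hence "\<not> (i = 0 \<or> n < i)" unfolding in_vecs_def by blast
  thus "i \<in> {1..n}" by auto
qed

lemma leading_pos_nonzero:
  assumes "in_vecs n w" and "w \<noteq> (\<lambda>_. 0)"
  shows "w (leading_pos w) \<noteq> 0" and "\<forall>i>leading_pos w. w i = 0" and "leading_pos w \<in> {1..n}"
proof -
  have fin: "finite {i. w i \<noteq> 0}" using in_vecs_support[OF assms(1)] finite_subset by blast
  have "{i. w i \<noteq> 0} \<noteq> {}" using assms(2) by auto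
  hence mem: "leading_pos w \<in> {i. w i \<noteq> 0}" unfolding leading_pos_def using Max_in fin by blast
  thus "w (leading_pos w) \<noteq> 0" by simp
  show "\<forall>i>leading_pos w. w i = 0"
    using Max_ge[OF fin] unfolding leading_pos_def by (auto simp: not_le[symmetric])
  show "leading_pos w \<in> {1..n}" using mem in_vecs_support[OF assms(1)] by blast
qed

lemma rowspanI: "v = (\<lambda>i. \<Sum>r=1..k. c r * R r i) \<Longrightarrow> v \<in> rowspan k R"
  unfolding rowspan_def by blast

lemma rowspan_diff:
  assumes "v \<in> rowspan k R" and "w \<in> rowspan k R"
  shows "(\<lambda>i. v i - w i) \<in> rowspan k R"
proof -
  obtain c d where "v = (\<lambda>i. \<Sum>r=1..k. c r * R r i)" and "w = (\<lambda>i. \<Sum>r=1..k. d r * R r i)"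
    using assms unfolding rowspan_def by auto
  hence "(\<lambda>i. v i - w i) = (\<lambda>i. \<Sum>r=1..k. (c r - d r) * R r i)"
    by (simp add: algebra_simps sum_subtractf)
  thus ?thesis by (rule rowspanI)
qed

lemma rowspan_sum:
  assumes "\<forall>x\<in>S. w x \<in> rowspan k R"
  shows "(\<lambda>i. \<Sum>x\<in>S. a x * w x i) \<in> rowspan k R"
proof -
  have "\<forall>x\<in>S. \<exists>c. w x = (\<lambda>i. \<Sum>r=1..k. c r * R r i)" using assms unfolding rowspan_def by auto
  then obtain C where C: "\<forall>x\<in>S. w x = (\<lambda>i. \<Sum>r=1..k. C x r * R r i)" by metis
  have "(\<lambda>i. \<Sum>x\<in>S. a x * w x i) = (\<lambda>i. \<Sum>r=1..k. (\<Sum>x\<in>S. a x * C x r) * R r i)"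
  proof
    fix i
    have "(\<Sum>x\<in>S. a x * w x i) = (\<Sum>x\<in>S. \<Sum>r=1..k. a x * C x r * R r i)"
      by (rule sum.cong) (auto simp: C sum_distrib_left mult.assoc)
    also have "\<dots> = (\<Sum>r=1..k. (\<Sum>x\<in>S. a x * C x r) * R r i)"
      by (subst sum.swap) (simp add: sum_distrib_right)
    finally show "(\<Sum>x\<in>S. a x * w x i) = (\<Sum>r=1..k. (\<Sum>x\<in>S. a x * C x r) * R r i)" .
  qed
  thus ?thesis by (rule rowspanI)
qed

lemma row_in_rowspan:
  assumes "r \<in> {1..k}" shows "R r \<in> rowspan k R"
proof (rule rowspanI[where c = "\<lambda>r'. if r' = r then 1 else 0"], rule ext)
  fix i
  have "(\<Sum>r'=1..k. (if r' = r then 1 else 0) * R r' i) = (\<Sum>r'=1..k. if r' = r then R r i else 0)"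
    by (rule sum.cong) auto
  thus "R r i = (\<Sum>r'=1..k. (if r' = r then 1 else 0) * R r' i)" using assms by simp
qed

lemma in_vecs_rowspan:
  assumes "\<forall>r\<in>{1..k}. in_vecs n (R r)" and "v \<in> rowspan k R"
  shows "in_vecs n v"
  using assms unfolding rowspan_def in_vecs_def by auto

lemma rowspan_eq_image:
  "rowspan k R = (\<lambda>c i. \<Sum>r=1..k. c r * R r i) ` (\<Pi>\<^sub>E r\<in>{1..k}. UNIV)"
proof
  show "rowspan k R \<subseteq> (\<lambda>c i. \<Sum>r=1..k. c r * R r i) ` (\<Pi>\<^sub>E r\<in>{1..k}. UNIV)"
  proof
    fix v assume "v \<in> rowspan k R"
    then obtain c where c: "v = (\<lambda>i. \<Sum>r=1..k. c r * R r i)" unfolding rowspan_def by auto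
    hence "v = (\<lambda>i. \<Sum>r=1..k. restrict c {1..k} r * R r i)" by simp
    moreover have "restrict c {1..k} \<in> (\<Pi>\<^sub>E r\<in>{1..k}. UNIV)" by simp
    ultimately show "v \<in> (\<lambda>c i. \<Sum>r=1..k. c r * R r i) ` (\<Pi>\<^sub>E r\<in>{1..k}. UNIV)" by blast
  qed
qed (auto simp: rowspan_def)

lemma finite_rowspan: "finite (rowspan k (R :: nat \<Rightarrow> nat \<Rightarrow> 'a::{finite,field}))"
  by (simp add: rowspan_eq_image finite_PiE)

lemma card_rowspan:
  fixes R :: "nat \<Rightarrow> nat \<Rightarrow> 'a::{finite,field}"
  assumes "lin_indep k R"
  shows "card (rowspan k R) = CARD('a) ^ k"
proof -
  have "inj_on (\<lambda>c i. \<Sum>r=1..k. c r * R r i) (\<Pi>\<^sub>E r\<in>{1..k}. UNIV)"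
  proof (rule inj_onI)
    fix c d :: "nat \<Rightarrow> 'a"
    assume c: "c \<in> (\<Pi>\<^sub>E r\<in>{1..k}. UNIV)" and d: "d \<in> (\<Pi>\<^sub>E r\<in>{1..k}. UNIV)"
      and eq: "(\<lambda>i. \<Sum>r=1..k. c r * R r i) = (\<lambda>i. \<Sum>r=1..k. d r * R r i)"
    have "(\<lambda>i. \<Sum>r=1..k. (c r - d r) * R r i) = (\<lambda>_. 0)"
      using eq by (simp add: fun_eq_iff algebra_simps sum_subtractf)
    hence "\<forall>r\<in>{1..k}. c r - d r = 0"
      using spec[OF assms[unfolded lin_indep_def], of "\<lambda>r. c r - d r"] by simp
    thus "c = d" using c d by (intro PiE_ext) auto
  qed
  thus ?thesis by (simp add: rowspan_eq_image card_image card_PiE)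
qed

section \<open>Reduced row echelon forms\<close>

lemma rref_row:
  assumes "is_rref n k M" and "r \<in> {1..k}"
  shows "in_vecs n (M r)" and "M r \<noteq> (\<lambda>_. 0)" and "M r (lead M r) = 1"
    and "\<forall>r'\<in>{1..k}. r' \<noteq> r \<longrightarrow> M r' (lead M r) = 0"
  using assms unfolding is_rref_def by auto

lemma rref_outside: "is_rref n k M \<Longrightarrow> r \<notin> {1..k} \<Longrightarrow> M r = (\<lambda>_. 0)"
  unfolding is_rref_def by blast

lemma rref_lead_antimono: "is_rref n k M \<Longrightarrow> strict_antimono_on {1..k} (lead M)"
  unfolding is_rref_def monotone_on_def by blast

lemma rref_entry_above_lead:
  assumes "is_rref n k M" and "r \<in> {1..k}" and "lead M r < i"
  shows "M r i = 0"
  using leading_pos_nonzero(2)[OF rref_row(1,2)[OF assms(1,2)]] assms(3)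
  by (simp add: lead_eq_leading_pos)

lemma rref_lead_in_range:
  assumes "is_rref n k M" and "r \<in> {1..k}"
  shows "lead M r \<in> {1..n}"
  using leading_pos_nonzero(3)[OF rref_row(1,2)[OF assms]] by (simp add: lead_eq_leading_pos)

lemma rref_comb_at_lead:
  assumes "is_rref n k M" and "r0 \<in> {1..k}"
  shows "(\<Sum>r=1..k. c r * M r (lead M r0)) = c r0"
proof -
  have "(\<Sum>r=1..k. c r * M r (lead M r0)) = (\<Sum>r=1..k. if r = r0 then c r0 else 0)"
    by (rule sum.cong) (use rref_row[OF assms] in auto)
  also have "\<dots> = c r0" using assms(2) by simp
  finally show ?thesis .
qed

text \<open>The leading position of a nonzero combination is the lead of the first row that occurs in it.\<close>
lemma rref_leading_pos_rowspan:
  assumes M: "is_rref n k M" and v: "v \<in> rowspan k M" and nz: "v \<noteq> (\<lambda>_. 0)"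
  shows "\<exists>r\<in>{1..k}. leading_pos v = lead M r"
proof -
  obtain c where c: "v = (\<lambda>i. \<Sum>r=1..k. c r * M r i)" using v unfolding rowspan_def by auto
  define S where "S = {r\<in>{1..k}. c r \<noteq> 0}"
  have "S \<noteq> {}" using nz unfolding c S_def by auto
  define r0 where "r0 = Min S"
  have r0: "r0 \<in> {1..k}" "c r0 \<noteq> 0" using Min_in[of S] \<open>S \<noteq> {}\<close> unfolding r0_def S_def by auto
  have "v i = 0" if i: "lead M r0 < i" for i
  proof -
    have "\<forall>r\<in>{1..k}. c r * M r i = 0"
    proof
      fix r assume r: "r \<in> {1..k}"
      show "c r * M r i = 0"
      proof (cases "c r = 0")
        case False
        hence "r0 \<le> r" using r unfolding r0_def S_def by simp
        hence "lead M r \<le> lead M r0"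
          using monotone_onD[OF rref_lead_antimono[OF M] r0(1) r] by (cases "r = r0") auto
        thus ?thesis using rref_entry_above_lead[OF M r] i by simp
      qed simp
    qed
    thus ?thesis unfolding c by (simp add: sum.neutral)
  qed
  moreover have "v (lead M r0) \<noteq> 0" using rref_comb_at_lead[OF M r0(1)] r0(2) unfolding c by simp
  ultimately show ?thesis using leading_pos_eqI r0(1) by blast
qed

lemma rref_lin_indep:
  assumes M: "is_rref n k M" shows "lin_indep k M"
  unfolding lin_indep_def
proof (intro allI impI ballI)
  fix c r assume "(\<lambda>i. \<Sum>r=1..k. c r * M r i) = (\<lambda>_. 0)" and r: "r \<in> {1..k}"
  hence "(\<Sum>r'=1..k. c r' * M r' (lead M r)) = 0" by (simp add: fun_eq_iff)
  thus "c r = 0" using rref_comb_at_lead[OF M r] by simp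
qed

lemma rowspan_rref_in_grass: "is_rref n k M \<Longrightarrow> rowspan k M \<in> grass n k"
  unfolding grass_def using rref_lin_indep[of n k M] rref_row(1)[of n k M] by blast

lemma card_greater_antimono_image:
  fixes f :: "nat \<Rightarrow> nat"
  assumes f: "strict_antimono_on {1..k} f" and r: "r \<in> {1..k}"
  shows "card {y \<in> f ` {1..k}. f r < y} = r - 1"
proof -
  have "{y \<in> f ` {1..k}. f r < y} = f ` {1..<r}"
  proof (intro equalityI subsetI)
    fix y assume "y \<in> {y \<in> f ` {1..k}. f r < y}"
    then obtain r' where r': "r' \<in> {1..k}" "y = f r'" "f r < f r'" by auto
    have "\<not> r < r'" using monotone_onD[OF f r r'(1)] r'(3) by auto
    moreover have "r' \<noteq> r" using r'(3) by auto
    ultimately have "r' < r" by linarith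
    thus "y \<in> f ` {1..<r}" using r' by auto
  qed (use monotone_onD[OF f] r in auto)
  moreover have "inj_on f {1..<r}"
    using f r by (auto simp: strict_antimono_iff_antimono intro: inj_on_subset)
  ultimately show ?thesis by (simp add: card_image)
qed

lemma strict_antimono_on_image_eq:
  fixes f g :: "nat \<Rightarrow> nat"
  assumes f: "strict_antimono_on {1..k} f" and g: "strict_antimono_on {1..k} g"
    and img: "f ` {1..k} = g ` {1..k}" and r: "r \<in> {1..k}"
  shows "f r = g r"
proof (rule ccontr)
  let ?F = "f ` {1..k}"
  have fr: "f r \<in> ?F" and gr: "g r \<in> ?F" using r img by auto
  have same: "card {y \<in> ?F. f r < y} = card {y \<in> ?F. g r < y}"
    using card_greater_antimono_image[OF f r] card_greater_antimono_image[OF g r] img by simp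
  assume "f r \<noteq> g r"
  then consider "f r < g r" | "g r < f r" by linarith
  thus False
  proof cases
    case 1
    hence "{y \<in> ?F. g r < y} \<subset> {y \<in> ?F. f r < y}" using gr by (auto intro!: psubsetI)
    hence "card {y \<in> ?F. g r < y} < card {y \<in> ?F. f r < y}" by (rule psubset_card_mono[rotated]) simp
    thus False using same by simp
  next
    case 2
    hence "{y \<in> ?F. f r < y} \<subset> {y \<in> ?F. g r < y}" using fr by (auto intro!: psubsetI)
    hence "card {y \<in> ?F. f r < y} < card {y \<in> ?F. g r < y}" by (rule psubset_card_mono[rotated]) simp
    thus False using same by simp
  qed
qed

lemma rref_rowspan_eq_zero:
  assumes M: "is_rref n k M" and v: "v \<in> rowspan k M" and z: "\<forall>r\<in>{1..k}. v (lead M r) = 0"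
  shows "v = (\<lambda>_. 0)"
proof (rule ccontr)
  assume nz: "v \<noteq> (\<lambda>_. 0)"
  have "in_vecs n v" using in_vecs_rowspan[OF _ v] rref_row(1)[OF M] by blast
  hence "v (leading_pos v) \<noteq> 0" using leading_pos_nonzero(1) nz by blast
  thus False using rref_leading_pos_rowspan[OF M v nz] z by auto
qed

definition pivots :: "(nat \<Rightarrow> 'a::zero) set \<Rightarrow> nat set" where
  "pivots V = {leading_pos w | w. w \<in> V \<and> w \<noteq> (\<lambda>_. 0)}"

lemma rref_pivots:
  assumes M: "is_rref n k M"
  shows "pivots (rowspan k M) = lead M ` {1..k}"
proof
  show "pivots (rowspan k M) \<subseteq> lead M ` {1..k}"
    unfolding pivots_def using rref_leading_pos_rowspan[OF M] by blast
  show "lead M ` {1..k} \<subseteq> pivots (rowspan k M)"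
  proof
    fix p assume "p \<in> lead M ` {1..k}"
    then obtain r where r: "r \<in> {1..k}" "p = lead M r" by blast
    thus "p \<in> pivots (rowspan k M)" unfolding pivots_def lead_eq_leading_pos
      using row_in_rowspan[OF r(1)] rref_row(2)[OF M r(1)] by blast
  qed
qed

lemma rref_unique:
  assumes M: "is_rref n k M" and N: "is_rref n k N" and eq: "rowspan k M = rowspan k N"
  shows "M = N"
proof
  have "lead M ` {1..k} = lead N ` {1..k}"
    unfolding rref_pivots[OF M, symmetric] rref_pivots[OF N, symmetric] eq ..
  hence leads: "lead M r = lead N r" if "r \<in> {1..k}" for r
    using strict_antimono_on_image_eq[OF rref_lead_antimono[OF M] rref_lead_antimono[OF N] _ that]
    by blast
  fix r
  show "M r = N r"
  proof (cases "r \<in> {1..k}")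
    case False thus ?thesis using rref_outside[OF M False] rref_outside[OF N False] by simp
  next
    case r: True
    have "M r \<in> rowspan k N" using row_in_rowspan[OF r, of M] eq by simp
    hence diff: "(\<lambda>i. M r i - N r i) \<in> rowspan k N" by (rule rowspan_diff[OF _ row_in_rowspan[OF r]])
    have "M r (lead N r') = N r (lead N r')" if r': "r' \<in> {1..k}" for r'
    proof (cases "r' = r")
      case True thus ?thesis using rref_row(3)[OF M r] rref_row(3)[OF N r] leads[OF r] by simp
    next
      case False thus ?thesis using rref_row(4)[OF M r'] rref_row(4)[OF N r'] leads[OF r'] r by simp
    qed
    hence "(\<lambda>i. M r i - N r i) = (\<lambda>_. 0)" by (intro rref_rowspan_eq_zero[OF N diff]) simp
    thus ?thesis by (simp add: fun_eq_iff)
  qed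
qed

lemma RE_rowspan: "is_rref n k M \<Longrightarrow> RE n k (rowspan k M) = M"
  unfolding RE_def by (rule the_equality) (auto intro: rref_unique)

section \<open>Existence of the reduced row echelon form\<close>

lemma one_less_card_field: "1 < CARD('a::{finite,field})"
proof -
  have "card {0::'a, 1} \<le> CARD('a)" by (rule card_mono) auto
  thus ?thesis by simp
qed

text \<open>Compare the coefficients at the largest p with d p \<noteq> 0.\<close>
lemma echelon_comb_eq_zero:
  fixes W :: "nat \<Rightarrow> nat \<Rightarrow> 'a::field"
  assumes fin: "finite P" and W: "\<forall>p\<in>P. W p p \<noteq> 0 \<and> (\<forall>i>p. W p i = 0)"
    and z: "(\<lambda>i. \<Sum>p\<in>P. d p * W p i) = (\<lambda>_. 0)"
  shows "\<forall>p\<in>P. d p = 0"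
proof (rule ccontr)
  define S where "S = {p\<in>P. d p \<noteq> 0}"
  define m where "m = Max S"
  assume "\<not> (\<forall>p\<in>P. d p = 0)"
  hence "S \<noteq> {}" unfolding S_def by auto
  moreover have finS: "finite S" using fin unfolding S_def by simp
  ultimately have "m \<in> S" unfolding m_def by (rule Max_in[rotated])
  hence m: "m \<in> P" "d m \<noteq> 0" unfolding S_def by auto
  have "(\<Sum>p\<in>P. d p * W p m) = (\<Sum>p\<in>P. if p = m then d m * W m m else 0)"
  proof (rule sum.cong)
    fix p assume p: "p \<in> P"
    show "d p * W p m = (if p = m then d m * W m m else 0)"
    proof (cases "p = m \<or> d p = 0")
      case False
      hence "p \<in> S" using p unfolding S_def by simp
      hence "p < m" using False Max_ge[OF finS] unfolding m_def by fastforce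
      thus ?thesis using W p False by simp
    qed auto
  qed simp
  also have "\<dots> = d m * W m m" using m(1) fin by simp
  finally have "d m * W m m = 0" using z by (simp add: fun_eq_iff)
  thus False using m W by simp
qed

context
  fixes n k :: nat and R :: "nat \<Rightarrow> nat \<Rightarrow> 'a::{finite,field}"
  assumes rows: "\<forall>r\<in>{1..k}. in_vecs n (R r)"
begin

lemma finite_pivots_rowspan: "finite (pivots (rowspan k R))"
proof (rule finite_subset)
  show "pivots (rowspan k R) \<subseteq> {1..n}"
  proof
    fix p assume "p \<in> pivots (rowspan k R)"
    then obtain w where "w \<in> rowspan k R" "w \<noteq> (\<lambda>_. 0)" "p = leading_pos w"
      unfolding pivots_def by blast
    thus "p \<in> {1..n}" using leading_pos_nonzero(3) in_vecs_rowspan[OF rows] by blast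
  qed
qed simp

lemma rowspan_eq_on_pivots:
  assumes v: "v \<in> rowspan k R" and w: "w \<in> rowspan k R"
    and eq: "\<forall>p\<in>pivots (rowspan k R). v p = w p"
  shows "v = w"
proof (rule ccontr)
  let ?d = "\<lambda>i. v i - w i"
  assume "v \<noteq> w"
  hence nz: "?d \<noteq> (\<lambda>_. 0)" by (auto simp: fun_eq_iff)
  have d: "?d \<in> rowspan k R" by (rule rowspan_diff[OF v w])
  hence "leading_pos ?d \<in> pivots (rowspan k R)" using nz unfolding pivots_def by blast
  moreover have "?d (leading_pos ?d) \<noteq> 0"
    using leading_pos_nonzero(1)[OF in_vecs_rowspan[OF rows d] nz] .
  ultimately show False using eq by simp
qed

lemma inj_on_restrict_pivots: "inj_on (\<lambda>v. restrict v (pivots (rowspan k R))) (rowspan k R)"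
proof (rule inj_onI)
  fix v w
  assume v: "v \<in> rowspan k R" and w: "w \<in> rowspan k R"
    and eq: "restrict v (pivots (rowspan k R)) = restrict w (pivots (rowspan k R))"
  have "\<forall>p\<in>pivots (rowspan k R). v p = w p"
  proof
    fix p assume "p \<in> pivots (rowspan k R)"
    thus "v p = w p" using fun_cong[OF eq, of p] by simp
  qed
  thus "v = w" by (rule rowspan_eq_on_pivots[OF v w])
qed

lemma card_rowspan_le_pivots: "card (rowspan k R) \<le> CARD('a) ^ card (pivots (rowspan k R))"
proof -
  let ?P = "pivots (rowspan k R)"
  have "(\<lambda>v. restrict v ?P) ` rowspan k R \<subseteq> (\<Pi>\<^sub>E p\<in>?P. UNIV)" by auto
  hence "card (rowspan k R) \<le> card (\<Pi>\<^sub>E p\<in>?P. UNIV :: 'a set)"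
    by (rule card_inj_on_le[OF inj_on_restrict_pivots]) (simp add: finite_PiE finite_pivots_rowspan)
  thus ?thesis by (simp add: card_PiE finite_pivots_rowspan)
qed

lemma pivots_card_le_rowspan: "CARD('a) ^ card (pivots (rowspan k R)) \<le> card (rowspan k R)"
proof -
  let ?P = "pivots (rowspan k R)"
  have "\<forall>p\<in>?P. \<exists>w. w \<in> rowspan k R \<and> w \<noteq> (\<lambda>_. 0) \<and> leading_pos w = p"
    unfolding pivots_def by blast
  from bchoice[OF this] obtain W
    where W: "\<forall>p\<in>?P. W p \<in> rowspan k R \<and> W p \<noteq> (\<lambda>_. 0) \<and> leading_pos (W p) = p" ..
  have echelon: "\<forall>p\<in>?P. W p p \<noteq> 0 \<and> (\<forall>i>p. W p i = 0)"
  proof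
    fix p assume p: "p \<in> ?P"
    hence "in_vecs n (W p)" using W in_vecs_rowspan[OF rows] by blast
    thus "W p p \<noteq> 0 \<and> (\<forall>i>p. W p i = 0)" using leading_pos_nonzero(1,2)[of n "W p"] W p by auto
  qed
  let ?Psi = "\<lambda>c i. \<Sum>p\<in>?P. c p * W p i"
  have "inj_on ?Psi (\<Pi>\<^sub>E p\<in>?P. UNIV)"
  proof (rule inj_onI)
    fix c d :: "nat \<Rightarrow> 'a"
    assume c: "c \<in> (\<Pi>\<^sub>E p\<in>?P. UNIV)" and d: "d \<in> (\<Pi>\<^sub>E p\<in>?P. UNIV)" and eq: "?Psi c = ?Psi d"
    have "(\<lambda>i. \<Sum>p\<in>?P. (c p - d p) * W p i) = (\<lambda>_. 0)"
      using eq by (simp add: fun_eq_iff algebra_simps sum_subtractf)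
    hence "\<forall>p\<in>?P. c p - d p = 0" by (rule echelon_comb_eq_zero[OF finite_pivots_rowspan echelon])
    thus "c = d" using c d by (intro PiE_ext) auto
  qed
  moreover have "?Psi ` (\<Pi>\<^sub>E p\<in>?P. UNIV) \<subseteq> rowspan k R"
  proof
    fix v assume "v \<in> ?Psi ` (\<Pi>\<^sub>E p\<in>?P. UNIV)"
    then obtain c where "v = ?Psi c" by blast
    thus "v \<in> rowspan k R" by (simp add: rowspan_sum W)
  qed
  ultimately have "card (\<Pi>\<^sub>E p\<in>?P. UNIV :: 'a set) \<le> card (rowspan k R)"
    by (rule card_inj_on_le[OF _ _ finite_rowspan])
  thus ?thesis by (simp add: card_PiE finite_pivots_rowspan)
qed

lemma rowspan_rref_eq:
  assumes M: "is_rref n m M" and sub: "\<forall>r\<in>{1..m}. M r \<in> rowspan k R"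
    and piv: "pivots (rowspan k R) \<subseteq> lead M ` {1..m}"
  shows "rowspan m M = rowspan k R"
proof
  show "rowspan m M \<subseteq> rowspan k R"
  proof
    fix v assume "v \<in> rowspan m M"
    then obtain c where "v = (\<lambda>i. \<Sum>r=1..m. c r * M r i)" unfolding rowspan_def by blast
    thus "v \<in> rowspan k R" using sub by (simp add: rowspan_sum)
  qed
  show "rowspan k R \<subseteq> rowspan m M"
  proof
    fix v assume v: "v \<in> rowspan k R"
    let ?w = "\<lambda>i. \<Sum>r=1..m. v (lead M r) * M r i"
    have w: "?w \<in> rowspan k R" using sub by (simp add: rowspan_sum)
    have "\<forall>p\<in>pivots (rowspan k R). v p = ?w p"
    proof
      fix p assume "p \<in> pivots (rowspan k R)"
      then obtain r where "r \<in> {1..m}" "p = lead M r" using piv by blast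
      thus "v p = ?w p" using rref_comb_at_lead[OF M, of r "\<lambda>r. v (lead M r)"] by simp
    qed
    hence "v = ?w" by (rule rowspan_eq_on_pivots[OF v w])
    thus "v \<in> rowspan m M" by (rule rowspanI)
  qed
qed

context
  assumes indep: "lin_indep k R"
begin

lemma card_pivots_rowspan: "card (pivots (rowspan k R)) = k"
proof -
  have "CARD('a) ^ card (pivots (rowspan k R)) = CARD('a) ^ k"
    using card_rowspan_le_pivots pivots_card_le_rowspan card_rowspan[OF indep] by simp
  thus ?thesis using one_less_card_field[where 'a='a] by (simp add: power_inject_exp)
qed

lemma restrict_pivots_surj:
  "(\<lambda>v. restrict v (pivots (rowspan k R))) ` rowspan k R = (\<Pi>\<^sub>E p\<in>pivots (rowspan k R). UNIV)"
proof (rule card_subset_eq)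
  show "finite (\<Pi>\<^sub>E p\<in>pivots (rowspan k R). UNIV :: 'a set)"
    by (simp add: finite_pivots_rowspan finite_PiE)
  show "card ((\<lambda>v. restrict v (pivots (rowspan k R))) ` rowspan k R) =
        card (\<Pi>\<^sub>E p\<in>pivots (rowspan k R). UNIV :: 'a set)"
    using card_image[OF inj_on_restrict_pivots] card_rowspan[OF indep] card_pivots_rowspan
    by (simp add: card_PiE finite_pivots_rowspan)
qed auto

lemma pivot_unit_vector:
  assumes p: "p \<in> pivots (rowspan k R)"
  obtains u where "u \<in> rowspan k R" and "leading_pos u = p" and "u p = 1"
    and "\<forall>p'\<in>pivots (rowspan k R). p' \<noteq> p \<longrightarrow> u p' = 0"
proof -
  let ?P = "pivots (rowspan k R)"
  have "restrict (\<lambda>p'. if p' = p then 1 else (0::'a)) ?P \<in> (\<lambda>v. restrict v ?P) ` rowspan k R"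
    using restrict_pivots_surj by simp
  then obtain u where u: "u \<in> rowspan k R"
    and "restrict u ?P = restrict (\<lambda>p'. if p' = p then 1 else 0) ?P" by auto
  hence up: "u p' = (if p' = p then 1 else 0)" if "p' \<in> ?P" for p'
    using that by (auto dest: fun_cong[where x = p'])
  have "u \<noteq> (\<lambda>_. 0)" using up[OF p] by (metis one_neq_zero)
  hence "leading_pos u \<in> ?P" "u (leading_pos u) \<noteq> 0"
    using u leading_pos_nonzero(1) in_vecs_rowspan[OF rows] unfolding pivots_def by blast+
  hence "leading_pos u = p" using up[of "leading_pos u"] by (simp split: if_splits)
  thus thesis using that u up p by simp
qed

end

end

lemma antimono_enumeration:
  fixes P :: "nat set"
  assumes fin: "finite P" and card: "card P = k"
  obtains f where "strict_antimono_on {1..k} f" and "f ` {1..k} = P"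
proof
  define xs where "xs = sorted_list_of_set P"
  have xs: "length xs = k" "sorted_wrt (<) xs" "set xs = P" using fin card unfolding xs_def by auto
  let ?f = "\<lambda>r. xs ! (k - r)"
  show mono: "strict_antimono_on {1..k} ?f"
    by (rule monotone_onI) (use xs(1) sorted_wrt_nth_less[OF xs(2)] in auto)
  show "?f ` {1..k} = P"
  proof (rule card_subset_eq[OF fin])
    show "?f ` {1..k} \<subseteq> P" using xs by auto
    show "card (?f ` {1..k}) = card P"
      using mono card by (simp add: strict_antimono_iff_antimono card_image)
  qed
qed

lemma is_rref_pivot_rows:
  assumes anti: "strict_antimono_on {1..k} f"
    and outside: "\<forall>r. r \<notin> {1..k} \<longrightarrow> M r = (\<lambda>_. 0)"
    and rows: "\<forall>r\<in>{1..k}. in_vecs n (M r) \<and> leading_pos (M r) = f r \<and> M r (f r) = 1"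
    and zero: "\<forall>r\<in>{1..k}. \<forall>r'\<in>{1..k}. r' \<noteq> r \<longrightarrow> M r' (f r) = 0"
  shows "is_rref n k M"
proof -
  have lead: "lead M r = f r" if "r \<in> {1..k}" for r
    using rows that by (simp add: lead_eq_leading_pos)
  show ?thesis
    unfolding is_rref_def
  proof (intro conjI ballI allI impI)
    fix r assume "r \<notin> {1..k}" thus "M r = (\<lambda>_. 0)" using outside by blast
  next
    fix r assume r: "r \<in> {1..k}"
    show "in_vecs n (M r)" using rows r by blast
    show "M r (lead M r) = 1" using rows r lead[OF r] by simp
    thus "M r \<noteq> (\<lambda>_. 0)" by (metis one_neq_zero)
    fix r' assume "r' \<in> {1..k}" "r' \<noteq> r"
    thus "M r' (lead M r) = 0" using zero r lead[OF r] by simp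
  next
    fix r r' assume "r \<in> {1..k}" "r' \<in> {1..k}" "r < r'"
    thus "lead M r' < lead M r" using lead monotone_onD[OF anti] by simp
  qed
qed

lemma rref_exists:
  fixes R :: "nat \<Rightarrow> nat \<Rightarrow> 'a::{finite,field}"
  assumes rows: "\<forall>r\<in>{1..k}. in_vecs n (R r)" and indep: "lin_indep k R"
  obtains M where "is_rref n k M" and "rowspan k M = rowspan k R"
proof -
  let ?V = "rowspan k R" and ?P = "pivots (rowspan k R)"
  obtain f where anti: "strict_antimono_on {1..k} f" and f: "f ` {1..k} = ?P"
    using antimono_enumeration[OF finite_pivots_rowspan[OF rows] card_pivots_rowspan[OF rows indep]] .
  have "\<forall>r\<in>{1..k}. \<exists>u. u \<in> ?V \<and> leading_pos u = f r \<and> u (f r) = 1 \<and> (\<forall>p\<in>?P. p \<noteq> f r \<longrightarrow> u p = 0)"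
  proof
    fix r assume "r \<in> {1..k}"
    hence "f r \<in> ?P" using f by blast
    thus "\<exists>u. u \<in> ?V \<and> leading_pos u = f r \<and> u (f r) = 1 \<and> (\<forall>p\<in>?P. p \<noteq> f r \<longrightarrow> u p = 0)"
      by (rule pivot_unit_vector[OF rows indep]) blast
  qed
  from bchoice[OF this] obtain U where U: "\<forall>r\<in>{1..k}. U r \<in> ?V \<and> leading_pos (U r) = f r \<and>
      U r (f r) = 1 \<and> (\<forall>p\<in>?P. p \<noteq> f r \<longrightarrow> U r p = 0)" ..
  define M where "M = (\<lambda>r. if r \<in> {1..k} then U r else (\<lambda>_. 0))"
  have Mr: "M r = U r" if "r \<in> {1..k}" for r using that by (simp add: M_def)
  have lead: "lead M r = f r" if "r \<in> {1..k}" for r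
    using U Mr[OF that] that by (simp add: lead_eq_leading_pos)
  have "is_rref n k M"
  proof (rule is_rref_pivot_rows[OF anti])
    show "\<forall>r. r \<notin> {1..k} \<longrightarrow> M r = (\<lambda>_. 0)" by (simp add: M_def)
    show "\<forall>r\<in>{1..k}. in_vecs n (M r) \<and> leading_pos (M r) = f r \<and> M r (f r) = 1"
      using U Mr in_vecs_rowspan[OF rows] by simp
    show "\<forall>r\<in>{1..k}. \<forall>r'\<in>{1..k}. r' \<noteq> r \<longrightarrow> M r' (f r) = 0"
    proof (intro ballI impI)
      fix r r' assume r: "r \<in> {1..k}" and r': "r' \<in> {1..k}" and "r' \<noteq> r"
      hence "f r \<noteq> f r'" using anti by (auto simp: strict_antimono_iff_antimono dest: inj_onD)
      moreover have "f r \<in> ?P" using f r by blast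
      ultimately show "M r' (f r) = 0" using U r' Mr[OF r'] by auto
    qed
  qed
  moreover have "rowspan k M = ?V"
  proof (rule rowspan_rref_eq[OF rows calculation])
    show "\<forall>r\<in>{1..k}. M r \<in> ?V" using U Mr by simp
    have "lead M ` {1..k} = f ` {1..k}" by (rule image_cong[OF refl lead])
    thus "?P \<subseteq> lead M ` {1..k}" using f by simp
  qed
  ultimately show thesis ..
qed

lemma RE_grass:
  fixes Y :: "(nat \<Rightarrow> 'a::{finite,field}) set"
  assumes "Y \<in> grass n k"
  shows "is_rref n k (RE n k Y)" and "rowspan k (RE n k Y) = Y"
proof -
  obtain R where R: "Y = rowspan k R" "\<forall>r\<in>{1..k}. in_vecs n (R r)" "lin_indep k R"
    using assms unfolding grass_def by blast
  obtain M where M: "is_rref n k M" and MY: "rowspan k M = Y"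
    using rref_exists[OF R(2,3)] R(1) by blast
  have "RE n k Y = M" using RE_rowspan[OF M] MY by simp
  thus "is_rref n k (RE n k Y)" and "rowspan k (RE n k Y) = Y" using M MY by simp_all
qed

section \<open>Subspaces with a full Ferrers diagram\<close>

lemma vX_eq: "vX n k Y i = (if i \<in> lead (RE n k Y) ` {1..k} then 1 else 0)"
proof -
  have "(\<exists>r\<in>{1..k}. lead (RE n k Y) r = i) \<longleftrightarrow> i \<in> lead (RE n k Y) ` {1..k}" by blast
  thus ?thesis unfolding vX_def by simp
qed

lemma rref_lead_less_iff:
  assumes M: "is_rref n k M" and r: "r \<in> {1..k}" and r': "r' \<in> {1..k}"
  shows "lead M r' < lead M r \<longleftrightarrow> r < r'"
proof (cases r r' rule: linorder_cases)
  case less thus ?thesis using monotone_onD[OF rref_lead_antimono[OF M] r r'] by simp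
next
  case greater thus ?thesis using monotone_onD[OF rref_lead_antimono[OF M] r' r] by simp
qed simp

lemma rref_leads_below:
  assumes M: "is_rref n k M" and r: "r \<in> {1..k}"
  shows "lead M ` {r<..k} \<subseteq> {1..<lead M r}" and "card (lead M ` {r<..k}) = k - r"
proof -
  show "lead M ` {r<..k} \<subseteq> {1..<lead M r}"
  proof
    fix p assume "p \<in> lead M ` {r<..k}"
    then obtain r' where r': "r' \<in> {r<..k}" "p = lead M r'" by blast
    hence "r' \<in> {1..k}" using r by auto
    thus "p \<in> {1..<lead M r}" using rref_lead_less_iff[OF M r] rref_lead_in_range[OF M] r' by auto
  qed
  show "card (lead M ` {r<..k}) = k - r"
    using rref_lead_antimono[OF M] r
    by (subst card_image) (auto simp: strict_antimono_iff_antimono intro: inj_on_subset)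
qed

lemma rref_lead_bounds:
  assumes M: "is_rref n k M" and r: "r \<in> {1..k}"
  shows "k + 1 \<le> lead M r + r" and "lead M r + r \<le> n + 1"
proof -
  have "k - r = card (lead M ` {r<..k})" using rref_leads_below(2)[OF M r] by simp
  also have "\<dots> \<le> card {1..<lead M r}" by (rule card_mono[OF _ rref_leads_below(1)[OF M r]]) simp
  finally have "k - r \<le> card {1..<lead M r}" .
  thus "k + 1 \<le> lead M r + r" using r rref_lead_in_range[OF M r] by (auto; arith)
  have sub: "lead M ` {1..<r} \<subseteq> {lead M r<..n}"
  proof
    fix p assume "p \<in> lead M ` {1..<r}"
    then obtain r' where r': "r' \<in> {1..<r}" "p = lead M r'" by blast
    hence "r' \<in> {1..k}" using r by auto
    thus "p \<in> {lead M r<..n}"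
      using rref_lead_less_iff[OF M _ r] rref_lead_in_range[OF M] r' by auto
  qed
  have inj: "inj_on (lead M) {1..<r}"
    using rref_lead_antimono[OF M] r by (auto simp: strict_antimono_iff_antimono intro: inj_on_subset)
  have "card {1..<r} \<le> card {lead M r<..n}" by (rule card_inj_on_le[OF inj sub]) simp
  moreover have "1 \<le> r" "lead M r \<le> n" using r rref_lead_in_range[OF M r] by auto
  ultimately show "lead M r + r \<le> n + 1" by simp
qed

lemma card_nonleads_below_lead:
  assumes M: "is_rref n k M" and r: "r \<in> {1..k}"
  shows "card {i\<in>{1..n}. i < lead M r \<and> i \<notin> lead M ` {1..k}} = lead M r - 1 - (k - r)"
proof -
  have "{i\<in>{1..n}. i < lead M r \<and> i \<notin> lead M ` {1..k}} = {1..<lead M r} - lead M ` {r<..k}"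
  proof (intro set_eqI iffI)
    fix i assume "i \<in> {i\<in>{1..n}. i < lead M r \<and> i \<notin> lead M ` {1..k}}"
    thus "i \<in> {1..<lead M r} - lead M ` {r<..k}" using r by auto
  next
    fix i assume i: "i \<in> {1..<lead M r} - lead M ` {r<..k}"
    have "i \<notin> lead M ` {1..k}"
    proof
      assume "i \<in> lead M ` {1..k}"
      then obtain r' where r': "r' \<in> {1..k}" "i = lead M r'" by blast
      hence "r' \<in> {r<..k}" using rref_lead_less_iff[OF M r r'(1)] i by auto
      thus False using i r' by blast
    qed
    thus "i \<in> {i\<in>{1..n}. i < lead M r \<and> i \<notin> lead M ` {1..k}}"
      using i rref_lead_in_range[OF M r] by auto
  qed
  thus ?thesis using rref_leads_below[OF M r] by (simp add: card_Diff_subset)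
qed

lemma ferrers_dots_eq:
  fixes Y :: "(nat \<Rightarrow> 'a::{finite,field}) set"
  assumes "Y \<in> grass n k"
  shows "ferrers_dots n k Y = (\<Sum>r=1..k. lead (RE n k Y) r - 1 - (k - r))"
proof -
  have "card {i\<in>{1..n}. i < lead (RE n k Y) r \<and> vX n k Y i = 0} = lead (RE n k Y) r - 1 - (k - r)"
    if r: "r \<in> {1..k}" for r
  proof -
    have "{i\<in>{1..n}. i < lead (RE n k Y) r \<and> vX n k Y i = 0} =
          {i\<in>{1..n}. i < lead (RE n k Y) r \<and> i \<notin> lead (RE n k Y) ` {1..k}}"
      unfolding vX_eq by auto
    thus ?thesis using card_nonleads_below_lead[OF RE_grass(1)[OF assms] r] by simp
  qed
  thus ?thesis unfolding ferrers_dots_def by (intro sum.cong) simp_all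
qed

lemma sum_eq_card_mult_iff:
  fixes f :: "'a \<Rightarrow> nat"
  assumes fin: "finite A" and le: "\<forall>x\<in>A. f x \<le> b"
  shows "sum f A = card A * b \<longleftrightarrow> (\<forall>x\<in>A. f x = b)"
proof -
  have "sum f A + sum (\<lambda>x. b - f x) A = sum (\<lambda>_. b) A"
    unfolding sum.distrib[symmetric] using le by (intro sum.cong) auto
  hence "sum f A + sum (\<lambda>x. b - f x) A = card A * b" by simp
  hence "sum f A = card A * b \<longleftrightarrow> sum (\<lambda>x. b - f x) A = 0" by linarith
  also have "\<dots> \<longleftrightarrow> (\<forall>x\<in>A. f x = b)" using fin le by (auto intro: le_antisym)
  finally show ?thesis .
qed

lemma full_set_iff:
  fixes Y :: "(nat \<Rightarrow> 'a::{finite,field}) set"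
  assumes kn: "k \<le> n"
  shows "Y \<in> full_set n k \<longleftrightarrow> Y \<in> grass n k \<and> (\<forall>r\<in>{1..k}. lead (RE n k Y) r = n + 1 - r)"
proof (cases "Y \<in> grass n k")
  case True
  let ?d = "\<lambda>r. lead (RE n k Y) r - 1 - (k - r)"
  have M: "is_rref n k (RE n k Y)" by (rule RE_grass(1)[OF True])
  have d: "?d r \<le> n - k" "?d r = n - k \<longleftrightarrow> lead (RE n k Y) r = n + 1 - r" if "r \<in> {1..k}" for r
    using rref_lead_bounds[OF M that] that kn by auto
  have "Y \<in> full_set n k \<longleftrightarrow> (\<Sum>r=1..k. ?d r) = card {1..k} * (n - k)"
    using True by (simp add: full_set_def ferrers_dots_eq)
  also have "\<dots> \<longleftrightarrow> (\<forall>r\<in>{1..k}. ?d r = n - k)" by (rule sum_eq_card_mult_iff) (use d in auto)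
  also have "\<dots> \<longleftrightarrow> (\<forall>r\<in>{1..k}. lead (RE n k Y) r = n + 1 - r)" using d by simp
  finally show ?thesis using True by simp
qed (simp add: full_set_def)

section \<open>Free blocks\<close>

text \<open>Blocks are stored column by column: A j t is the entry in row t of column j.\<close>

definition blocks :: "nat \<Rightarrow> nat \<Rightarrow> (nat \<Rightarrow> nat \<Rightarrow> 'a) set" where
  "blocks m k = (\<Pi>\<^sub>E j\<in>{1..m}. \<Pi>\<^sub>E t\<in>{1..k}. UNIV)"

definition free_block :: "nat \<Rightarrow> nat \<Rightarrow> (nat \<Rightarrow> nat \<Rightarrow> 'a) \<Rightarrow> nat \<Rightarrow> nat \<Rightarrow> 'a" where
  "free_block n k M = (\<lambda>j\<in>{1..n-k}. \<lambda>t\<in>{1..k}. M t j)"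

definition std_rref :: "nat \<Rightarrow> nat \<Rightarrow> (nat \<Rightarrow> nat \<Rightarrow> 'a::field) \<Rightarrow> nat \<Rightarrow> nat \<Rightarrow> 'a" where
  "std_rref n k A = (\<lambda>r i. if r \<in> {1..k} \<and> i \<in> {1..n} then
      (if i \<le> n - k then A i r else if i = n + 1 - r then 1 else 0) else 0)"

lemma free_block_in_blocks: "free_block n k M \<in> blocks (n - k) k"
  unfolding free_block_def blocks_def by auto

lemma lead_std_rref:
  assumes kn: "k < n" and r: "r \<in> {1..k}"
  shows "lead (std_rref n k A) r = n + 1 - r"
  unfolding lead_eq_leading_pos
proof (rule leading_pos_eqI)
  show "std_rref n k A r (n + 1 - r) \<noteq> 0" using kn r unfolding std_rref_def by auto
  show "\<forall>i>n + 1 - r. std_rref n k A r i = 0" using kn r unfolding std_rref_def by auto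
qed

lemma std_rref_is_rref:
  assumes kn: "k < n"
  shows "is_rref n k (std_rref n k A)"
  unfolding is_rref_def
proof (intro conjI allI impI ballI)
  fix r assume "r \<notin> {1..k}" thus "std_rref n k A r = (\<lambda>_. 0)" unfolding std_rref_def by auto
next
  fix r assume r: "r \<in> {1..k}"
  show "in_vecs n (std_rref n k A r)" unfolding in_vecs_def std_rref_def by auto
  have lead: "lead (std_rref n k A) r = n + 1 - r" by (rule lead_std_rref[OF kn r])
  show "std_rref n k A r (lead (std_rref n k A) r) = 1"
    unfolding lead using kn r by (auto simp: std_rref_def)
  thus "std_rref n k A r \<noteq> (\<lambda>_. 0)" by (metis one_neq_zero)
  fix r' assume "r' \<in> {1..k}" "r' \<noteq> r"
  thus "std_rref n k A r' (lead (std_rref n k A) r) = 0"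
    unfolding lead using kn r by (auto simp: std_rref_def)
next
  fix r r' assume "r \<in> {1..k}" "r' \<in> {1..k}" "r < r'"
  thus "lead (std_rref n k A) r' < lead (std_rref n k A) r" using kn by (simp add: lead_std_rref)
qed

lemma free_block_std_rref:
  assumes kn: "k < n" and A: "A \<in> blocks (n - k) k"
  shows "free_block n k (std_rref n k A) = A"
proof -
  have "free_block n k (std_rref n k A) \<in> (\<Pi>\<^sub>E j\<in>{1..n-k}. \<Pi>\<^sub>E t\<in>{1..k}. UNIV)"
    using free_block_in_blocks unfolding blocks_def .
  thus ?thesis
  proof (rule PiE_ext)
    show "A \<in> (\<Pi>\<^sub>E j\<in>{1..n-k}. \<Pi>\<^sub>E t\<in>{1..k}. UNIV)" using A unfolding blocks_def .
    fix j assume j: "j \<in> {1..n-k}"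
    show "free_block n k (std_rref n k A) j = A j"
    proof (rule PiE_ext)
      show "free_block n k (std_rref n k A) j \<in> (\<Pi>\<^sub>E t\<in>{1..k}. UNIV)"
        using j by (simp add: free_block_def)
      show "A j \<in> (\<Pi>\<^sub>E t\<in>{1..k}. UNIV)" using A j unfolding blocks_def by auto
      fix t assume "t \<in> {1..k}"
      thus "free_block n k (std_rref n k A) j t = A j t"
        using j kn by (auto simp: free_block_def std_rref_def)
    qed
  qed
qed

lemma std_rref_free_block:
  assumes kn: "k < n" and M: "is_rref n k M" and leads: "\<forall>r\<in>{1..k}. lead M r = n + 1 - r"
  shows "std_rref n k (free_block n k M) = M"
proof (intro ext)
  fix r i
  show "std_rref n k (free_block n k M) r i = M r i"
  proof (cases "r \<in> {1..k} \<and> i \<in> {1..n}")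
    case False
    have "M r i = 0"
    proof (cases "r \<in> {1..k}")
      case True
      hence "i = 0 \<or> n < i" using False by auto
      thus ?thesis using rref_row(1)[OF M True] unfolding in_vecs_def by blast
    qed (simp add: rref_outside[OF M])
    moreover have "std_rref n k (free_block n k M) r i = 0"
      unfolding std_rref_def using False by (rule if_not_P)
    ultimately show ?thesis by simp
  next
    case True
    show ?thesis
    proof (cases "i \<le> n - k")
      case True
      thus ?thesis using \<open>r \<in> {1..k} \<and> i \<in> {1..n}\<close> unfolding std_rref_def free_block_def by auto
    next
      case False
      define r' where "r' = n + 1 - i"
      have r'k: "r' \<in> {1..k}" using False True kn unfolding r'_def by auto
      hence r': "r' \<in> {1..k}" "lead M r' = i" using leads True unfolding r'_def by auto
      have "M r i = (if r = r' then 1 else 0)" using rref_row(3,4)[OF M r'(1)] r' True by auto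
      thus ?thesis using False True unfolding std_rref_def r'_def by auto
    qed
  qed
qed

lemma bij_betw_full_set_blocks:
  assumes kn: "k < n"
  shows "bij_betw (\<lambda>Y. free_block n k (RE n k Y))
           (full_set n k :: (nat \<Rightarrow> 'a::{finite,field}) set set) (blocks (n - k) k)"
proof (rule bij_betwI')
  have std: "std_rref n k (free_block n k (RE n k Y)) = RE n k Y"
    and span: "rowspan k (RE n k Y) = Y" if "Y \<in> full_set n k" for Y :: "(nat \<Rightarrow> 'a) set"
  proof -
    have "is_rref n k (RE n k Y)" "\<forall>r\<in>{1..k}. lead (RE n k Y) r = n + 1 - r"
      using that full_set_iff[of k n Y] kn RE_grass(1)[of Y n k] by auto
    thus "std_rref n k (free_block n k (RE n k Y)) = RE n k Y" by (rule std_rref_free_block[OF kn])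
    show "rowspan k (RE n k Y) = Y" using that full_set_iff[of k n Y] kn RE_grass(2) by auto
  qed
  fix Y Z :: "(nat \<Rightarrow> 'a) set"
  assume Y: "Y \<in> full_set n k" and Z: "Z \<in> full_set n k"
  show "free_block n k (RE n k Y) = free_block n k (RE n k Z) \<longleftrightarrow> Y = Z"
  proof
    assume eq: "free_block n k (RE n k Y) = free_block n k (RE n k Z)"
    have "Y = rowspan k (std_rref n k (free_block n k (RE n k Y)))" using std[OF Y] span[OF Y] by simp
    also have "\<dots> = Z" unfolding eq using std[OF Z] span[OF Z] by simp
    finally show "Y = Z" .
  qed simp
next
  fix Y :: "(nat \<Rightarrow> 'a) set"
  show "free_block n k (RE n k Y) \<in> blocks (n - k) k" by (rule free_block_in_blocks)
next
  fix A :: "nat \<Rightarrow> nat \<Rightarrow> 'a" assume A: "A \<in> blocks (n - k) k"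
  let ?Y = "rowspan k (std_rref n k A)"
  have RE: "RE n k ?Y = std_rref n k A" by (rule RE_rowspan[OF std_rref_is_rref[OF kn]])
  have "?Y \<in> full_set n k"
    using full_set_iff[of k n ?Y] kn rowspan_rref_in_grass[OF std_rref_is_rref[OF kn]]
    by (simp add: RE lead_std_rref)
  moreover have "A = free_block n k (RE n k ?Y)" using free_block_std_rref[OF kn A] RE by simp
  ultimately show "\<exists>Y\<in>full_set n k. A = free_block n k (RE n k Y)" by blast
qed

section \<open>Column values\<close>

definition column_value :: "('a::finite \<Rightarrow> nat) \<Rightarrow> nat \<Rightarrow> (nat \<Rightarrow> 'a) \<Rightarrow> nat" where
  "column_value phi k c = (\<Sum>t=1..k. phi (c t) * CARD('a) ^ (k - t))"

lemma colval_eq_column_value_RE: "colval phi n k X i = column_value phi k (\<lambda>t. RE n k X t i)"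
  by (simp add: colval_def column_value_def)

lemma colval_eq_column_value_free_block:
  assumes "i \<in> {1..n - k}"
  shows "colval phi n k X i = column_value phi k (free_block n k (RE n k X) i)"
  unfolding colval_def column_value_def free_block_def using assms by (intro sum.cong) auto

lemma digit_sum_less:
  fixes q :: nat
  assumes "\<forall>j<m. d j < q"
  shows "(\<Sum>j<m. d j * q ^ j) < q ^ m"
  using assms
proof (induction m)
  case (Suc m)
  have "d m < q" using Suc.prems lessI by blast
  hence dm: "d m + 1 \<le> q" by linarith
  have "(\<Sum>j<Suc m. d j * q ^ j) = (\<Sum>j<m. d j * q ^ j) + d m * q ^ m" by simp
  also have "\<dots> < q ^ m + d m * q ^ m" using Suc by simp
  also have "\<dots> = (d m + 1) * q ^ m" by simp
  also have "\<dots> \<le> q * q ^ m" using dm by (rule mult_le_mono1)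
  finally show ?case by simp
qed simp

lemma digit_sum_inj:
  fixes q :: nat
  assumes "\<forall>j<m. d j < q" and "\<forall>j<m. e j < q"
    and "(\<Sum>j<m. d j * q ^ j) = (\<Sum>j<m. e j * q ^ j)"
  shows "\<forall>j<m. d j = e j"
  using assms
proof (induction m)
  case (Suc m)
  define A where "A = (\<Sum>j<m. d j * q ^ j)"
  define B where "B = (\<Sum>j<m. e j * q ^ j)"
  have A: "A < q ^ m" and B: "B < q ^ m"
    unfolding A_def B_def using digit_sum_less[of m d q] digit_sum_less[of m e q] Suc.prems(1,2) by simp_all
  have qm: "q ^ m \<noteq> 0" using A by linarith
  have eq: "A + d m * q ^ m = B + e m * q ^ m" using Suc.prems(3) unfolding A_def B_def by simp
  have "(A + d m * q ^ m) div q ^ m = d m" "(B + e m * q ^ m) div q ^ m = e m" using A B qm by simp_all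
  hence "d m = e m" using eq by simp
  have "(A + d m * q ^ m) mod q ^ m = A" "(B + e m * q ^ m) mod q ^ m = B" using A B by simp_all
  hence "A = B" using eq by simp
  moreover have "\<forall>j<m. d j < q" "\<forall>j<m. e j < q" using Suc.prems(1,2) by simp_all
  ultimately have "\<forall>j<m. d j = e j" using Suc.IH unfolding A_def B_def by blast
  thus ?case using \<open>d m = e m\<close> by (auto simp: less_Suc_eq)
qed simp

lemma sum_reverse_powers:
  "(\<Sum>t=1..k. f t * q ^ (k - t)) = (\<Sum>j<k. f (k - j) * (q::nat) ^ j)"
  by (rule sum.reindex_bij_witness[of _ "\<lambda>j. k - j" "\<lambda>t. k - t"]) auto

context
  fixes phi :: "'a::finite \<Rightarrow> nat"
  assumes phi: "bij_betw phi UNIV {..<CARD('a)}"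
begin

lemma phi_less: "phi x < CARD('a)"
  using bij_betwE[OF phi] by blast

lemma column_value_less: "column_value phi k c < CARD('a) ^ k"
proof -
  have "column_value phi k c = (\<Sum>j<k. phi (c (k - j)) * CARD('a) ^ j)"
    unfolding column_value_def by (rule sum_reverse_powers)
  also have "\<dots> < CARD('a) ^ k" by (rule digit_sum_less) (simp add: phi_less)
  finally show ?thesis .
qed

lemma inj_on_column_value: "inj_on (column_value phi k) (\<Pi>\<^sub>E t\<in>{1..k}. UNIV)"
proof (rule inj_onI)
  fix c c' assume c: "c \<in> (\<Pi>\<^sub>E t\<in>{1..k}. UNIV)" and c': "c' \<in> (\<Pi>\<^sub>E t\<in>{1..k}. UNIV)"
    and eq: "column_value phi k c = column_value phi k c'"
  from eq have digits: "\<forall>j<k. phi (c (k - j)) = phi (c' (k - j))"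
    unfolding column_value_def sum_reverse_powers by (rule digit_sum_inj[rotated 2]) (simp_all add: phi_less)
  have "phi (c t) = phi (c' t)" if t: "t \<in> {1..k}" for t
  proof -
    have "k - t < k" using t by auto
    hence "phi (c (k - (k - t))) = phi (c' (k - (k - t)))" using digits by blast
    thus ?thesis using t by simp
  qed
  hence "c t = c' t" if "t \<in> {1..k}" for t
    using that bij_betw_imp_inj_on[OF phi] by (simp add: inj_eq)
  thus "c = c'" using c c' by (intro PiE_ext) auto
qed

lemma bij_betw_column_value:
  "bij_betw (column_value phi k) (\<Pi>\<^sub>E t\<in>{1..k}. UNIV) {..<CARD('a) ^ k}"
  unfolding bij_betw_def
proof
  show "inj_on (column_value phi k) (\<Pi>\<^sub>E t\<in>{1..k}. UNIV)" by (rule inj_on_column_value)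
  show "column_value phi k ` (\<Pi>\<^sub>E t\<in>{1..k}. UNIV) = {..<CARD('a) ^ k}"
  proof (rule card_subset_eq)
    show "column_value phi k ` (\<Pi>\<^sub>E t\<in>{1..k}. UNIV) \<subseteq> {..<CARD('a) ^ k}"
      using column_value_less by auto
    show "card (column_value phi k ` (\<Pi>\<^sub>E t\<in>{1..k}. UNIV)) = card {..<CARD('a) ^ k}"
      by (subst card_image[OF inj_on_column_value]) (simp add: card_PiE)
  qed simp
qed

lemma card_column_value_greater:
  assumes "v < CARD('a) ^ k"
  shows "card {c \<in> (\<Pi>\<^sub>E t\<in>{1..k}. UNIV). v < column_value phi k c} = CARD('a) ^ k - 1 - v"
proof -
  have "bij_betw (column_value phi k) {c \<in> (\<Pi>\<^sub>E t\<in>{1..k}. UNIV). v < column_value phi k c}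
          {x \<in> {..<CARD('a) ^ k}. v < x}"
    by (rule bij_betw_Collect[OF bij_betw_column_value]) simp
  hence "card {c \<in> (\<Pi>\<^sub>E t\<in>{1..k}. UNIV). v < column_value phi k c} = card {x \<in> {..<CARD('a) ^ k}. v < x}"
    by (rule bij_betw_same_card)
  also have "{x \<in> {..<CARD('a) ^ k}. v < x} = {v<..<CARD('a) ^ k}" by auto
  finally show ?thesis by simp
qed

end

section \<open>Counting blocks\<close>

definition block_lex_greater ::
    "('a::finite \<Rightarrow> nat) \<Rightarrow> nat \<Rightarrow> nat \<Rightarrow> (nat \<Rightarrow> nat \<Rightarrow> 'a) \<Rightarrow> (nat \<Rightarrow> nat \<Rightarrow> 'a) \<Rightarrow> bool" where
  "block_lex_greater phi k l x A \<longleftrightarrow>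
     (\<exists>i\<in>{1..l}. (\<forall>j\<in>{1..<i}. A j = x j) \<and> column_value phi k (x i) < column_value phi k (A i))"

lemma blocks_prefix_eq_PiE:
  assumes i: "i \<in> {1..m}" and x: "\<forall>j\<in>{1..<i}. x j \<in> (\<Pi>\<^sub>E t\<in>{1..k}. UNIV)"
  shows "{A \<in> blocks m k. (\<forall>j\<in>{1..<i}. A j = x j) \<and> P (A i)} =
         (\<Pi>\<^sub>E j\<in>{1..m}. if j < i then {x j} else if j = i then {c \<in> (\<Pi>\<^sub>E t\<in>{1..k}. UNIV). P c}
                            else (\<Pi>\<^sub>E t\<in>{1..k}. UNIV))"
    (is "_ = (\<Pi>\<^sub>E j\<in>{1..m}. ?D j)")
proof (intro set_eqI iffI)
  fix A assume A: "A \<in> {A \<in> blocks m k. (\<forall>j\<in>{1..<i}. A j = x j) \<and> P (A i)}"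
  show "A \<in> (\<Pi>\<^sub>E j\<in>{1..m}. ?D j)"
  proof (rule PiE_I)
    fix j assume j: "j \<in> {1..m}"
    hence "A j \<in> (\<Pi>\<^sub>E t\<in>{1..k}. UNIV)" using A unfolding blocks_def by (blast dest: PiE_mem)
    thus "A j \<in> ?D j" using A j by auto
  next
    fix j assume "j \<notin> {1..m}" thus "A j = undefined" using A unfolding blocks_def by auto
  qed
next
  fix A assume A: "A \<in> (\<Pi>\<^sub>E j\<in>{1..m}. ?D j)"
  hence AD: "A j \<in> ?D j" if "j \<in> {1..m}" for j using that by blast
  have "A \<in> blocks m k" unfolding blocks_def
  proof (rule PiE_I)
    fix j assume j: "j \<in> {1..m}"
    show "A j \<in> (\<Pi>\<^sub>E t\<in>{1..k}. UNIV)" using AD[OF j] x j by (auto split: if_splits)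
  next
    fix j assume "j \<notin> {1..m}" thus "A j = undefined" using A by auto
  qed
  moreover have "\<forall>j\<in>{1..<i}. A j = x j"
  proof
    fix j assume j: "j \<in> {1..<i}"
    hence "j \<in> {1..m}" using i by auto
    hence "A j \<in> ?D j" by (rule AD)
    thus "A j = x j" using j by simp
  qed
  moreover have "P (A i)" using AD[of i] i by simp
  ultimately show "A \<in> {A \<in> blocks m k. (\<forall>j\<in>{1..<i}. A j = x j) \<and> P (A i)}"
    by blast
qed

context
  fixes phi :: "'a::finite \<Rightarrow> nat"
  assumes phi: "bij_betw phi UNIV {..<CARD('a)}"
begin

lemma card_blocks_greater_at:
  assumes i: "i \<in> {1..m}" and x: "\<forall>j\<in>{1..<i}. x j \<in> (\<Pi>\<^sub>E t\<in>{1..k}. UNIV)"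
    and v: "v < CARD('a) ^ k"
  shows "card {A \<in> blocks m k. (\<forall>j\<in>{1..<i}. A j = x j) \<and> v < column_value phi k (A i)}
         = (CARD('a) ^ k - 1 - v) * CARD('a) ^ (k * (m - i))"
proof -
  let ?C = "\<Pi>\<^sub>E t\<in>{1..k}. (UNIV :: 'a set)"
  define D where "D j = (if j < i then {x j} else if j = i then {c \<in> ?C. v < column_value phi k c} else ?C)"
    for j
  have "{A \<in> blocks m k. (\<forall>j\<in>{1..<i}. A j = x j) \<and> v < column_value phi k (A i)} = (\<Pi>\<^sub>E j\<in>{1..m}. D j)"
    unfolding D_def by (rule blocks_prefix_eq_PiE[OF i x])
  moreover have "{1..m} = {1..<i} \<union> insert i {i<..m}" using i by auto
  hence "(\<Prod>j\<in>{1..m}. card (D j)) =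
         (\<Prod>j\<in>{1..<i}. card (D j)) * (card (D i) * (\<Prod>j\<in>{i<..m}. card (D j)))"
    by (simp only:) (subst prod.union_disjoint; auto)
  moreover have "(\<Prod>j\<in>{1..<i}. card (D j)) = 1" by (simp add: D_def)
  moreover have "card (D i) = CARD('a) ^ k - 1 - v" using card_column_value_greater[OF phi v] by (simp add: D_def)
  moreover have "(\<Prod>j\<in>{i<..m}. card (D j)) = CARD('a) ^ (k * (m - i))"
    by (simp add: D_def card_PiE power_mult)
  ultimately show ?thesis by (simp add: card_PiE)
qed

lemma card_blocks_lex_greater:
  assumes l: "l \<le> m" and x: "\<forall>j\<in>{1..l}. x j \<in> (\<Pi>\<^sub>E t\<in>{1..k}. UNIV)"
  shows "card {A \<in> blocks m k. block_lex_greater phi k l x A} =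
         (\<Sum>i=1..l. (CARD('a) ^ k - 1 - column_value phi k (x i)) * CARD('a) ^ (k * (m - i)))"
proof -
  define T where "T i = {A \<in> blocks m k. (\<forall>j\<in>{1..<i}. A j = x j) \<and>
                           column_value phi k (x i) < column_value phi k (A i)}" for i
  have "finite (blocks m k :: (nat \<Rightarrow> nat \<Rightarrow> 'a) set)" unfolding blocks_def by (intro finite_PiE) auto
  hence fin: "finite (T i)" for i unfolding T_def by simp
  have disj: "T i \<inter> T i' = {}" if "i \<in> {1..l}" and "i < i'" for i i'
  proof -
    have "A i = x i" if "A \<in> T i'" for A using that \<open>i \<in> {1..l}\<close> \<open>i < i'\<close> unfolding T_def by auto
    thus ?thesis unfolding T_def by auto
  qed
  have disj': "\<forall>i\<in>{1..l}. \<forall>i'\<in>{1..l}. i \<noteq> i' \<longrightarrow> T i \<inter> T i' = {}"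
  proof (intro ballI impI)
    fix i i' :: nat assume "i \<in> {1..l}" "i' \<in> {1..l}" "i \<noteq> i'"
    then consider "i < i'" | "i' < i" by linarith
    thus "T i \<inter> T i' = {}"
      by cases (use disj[of i i'] disj[of i' i] \<open>i \<in> {1..l}\<close> \<open>i' \<in> {1..l}\<close> in blast)+
  qed
  have "{A \<in> blocks m k. block_lex_greater phi k l x A} = (\<Union>i\<in>{1..l}. T i)"
    unfolding block_lex_greater_def T_def by blast
  also have "card \<dots> = (\<Sum>i=1..l. card (T i))" by (rule card_UN_disjoint) (use fin disj' in auto)
  also have "\<dots> = (\<Sum>i=1..l. (CARD('a) ^ k - 1 - column_value phi k (x i)) * CARD('a) ^ (k * (m - i)))"
  proof (rule sum.cong)
    fix i assume i: "i \<in> {1..l}"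
    show "card (T i) = (CARD('a) ^ k - 1 - column_value phi k (x i)) * CARD('a) ^ (k * (m - i))"
      unfolding T_def
      by (rule card_blocks_greater_at[OF _ _ column_value_less[OF phi]]) (use i l x in auto)
  qed simp
  finally show ?thesis .
qed

end

section \<open>The order on extended representations\<close>

lemma vX_full_set:
  fixes Y :: "(nat \<Rightarrow> 'a::{finite,field}) set"
  assumes kn: "k \<le> n" and Y: "Y \<in> full_set n k" and i: "i \<in> {1..n - k}"
  shows "vX n k Y i = 0"
proof -
  have "\<forall>r\<in>{1..k}. lead (RE n k Y) r = n + 1 - r" using full_set_iff[OF kn] Y by blast
  hence "i \<notin> lead (RE n k Y) ` {1..k}" using i kn by auto
  thus ?thesis by (simp add: vX_eq)
qed

lemma ext_col_differ_iff_free_block: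
  assumes "vX n k X i = 0" and "vX n k Y i = 0" and "i \<in> {1..n - k}"
  shows "ext_col_differ n k X Y i \<longleftrightarrow> free_block n k (RE n k X) i \<noteq> free_block n k (RE n k Y) i"
  using assms unfolding ext_col_differ_def free_block_def by (auto simp: fun_eq_iff restrict_def)

lemma colval_less:
  fixes phi :: "'a::{finite,field} \<Rightarrow> nat"
  assumes "bij_betw phi UNIV {..<CARD('a)}"
  shows "colval phi n k X i < CARD('a) ^ k"
  unfolding colval_eq_column_value_RE by (rule column_value_less[OF assms])

lemma extval_less_iff_free_block:
  assumes "vX n k X i = 0" and "vX n k Y i = 0" and "i \<in> {1..n - k}"
  shows "extval phi n k X i < extval phi n k Y i \<longleftrightarrow>
         column_value phi k (free_block n k (RE n k X) i) < column_value phi k (free_block n k (RE n k Y) i)"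
  using assms by (simp add: extval_def colval_eq_column_value_free_block)

lemma ext_col_top_one_zero:
  fixes phi :: "'a::{finite,field} \<Rightarrow> nat" and X Y :: "(nat \<Rightarrow> 'a) set"
  assumes phi: "bij_betw phi UNIV {..<CARD('a)}" and "vX n k X i = 1" and "vX n k Y i = 0"
  shows "ext_col_differ n k X Y i" and "\<not> extval phi n k X i < extval phi n k Y i"
  using assms colval_less[OF phi, of n k Y i] by (auto simp: ext_col_differ_def extval_def)

lemma ext_less_iff_first_columns:
  fixes phi :: "'a::{finite,field} \<Rightarrow> nat" and X Y :: "(nat \<Rightarrow> 'a) set"
  assumes l: "l + 1 \<le> n" and differ: "ext_col_differ n k X Y (l + 1)"
    and not_less: "\<not> extval phi n k X (l + 1) < extval phi n k Y (l + 1)"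
  shows "ext_less phi n k X Y \<longleftrightarrow>
    (\<exists>i\<in>{1..l}. ext_col_differ n k X Y i \<and> (\<forall>j\<in>{1..<i}. \<not> ext_col_differ n k X Y j) \<and>
                extval phi n k X i < extval phi n k Y i)"
proof
  assume "ext_less phi n k X Y"
  then obtain i where i: "i \<in> {1..n}" "ext_col_differ n k X Y i"
    "\<forall>j\<in>{1..n}. j < i \<longrightarrow> \<not> ext_col_differ n k X Y j" "extval phi n k X i < extval phi n k Y i"
    unfolding ext_less_def by blast
  have "i \<le> l + 1"
  proof (rule ccontr)
    assume "\<not> i \<le> l + 1"
    hence "l + 1 \<in> {1..n}" "l + 1 < i" using l by auto
    thus False using i(3) differ by blast
  qed
  moreover have "i \<noteq> l + 1" using i(4) not_less by auto
  ultimately have "i \<in> {1..l}" using i(1) by auto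
  moreover have "\<forall>j\<in>{1..<i}. \<not> ext_col_differ n k X Y j" using i(1,3) by auto
  ultimately show "\<exists>i\<in>{1..l}. ext_col_differ n k X Y i \<and> (\<forall>j\<in>{1..<i}. \<not> ext_col_differ n k X Y j) \<and>
                extval phi n k X i < extval phi n k Y i"
    using i(2,4) by blast
next
  assume "\<exists>i\<in>{1..l}. ext_col_differ n k X Y i \<and> (\<forall>j\<in>{1..<i}. \<not> ext_col_differ n k X Y j) \<and>
                extval phi n k X i < extval phi n k Y i"
  then obtain i where i: "i \<in> {1..l}" "ext_col_differ n k X Y i"
    "\<forall>j\<in>{1..<i}. \<not> ext_col_differ n k X Y j" "extval phi n k X i < extval phi n k Y i" by blast
  have "i \<in> {1..n}" using i(1) l by auto
  moreover have "\<forall>j\<in>{1..n}. j < i \<longrightarrow> \<not> ext_col_differ n k X Y j" using i(1,3) by auto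
  ultimately show "ext_less phi n k X Y" unfolding ext_less_def using i(2,4) by blast
qed

text \<open>Columns l + 1 of X and Y already differ in the top row of EXT, and there X is larger, so
  X < Y can only be decided by one of the first l columns, where both top entries vanish.\<close>
lemma ext_less_full_set_iff:
  fixes phi :: "'a::{finite,field} \<Rightarrow> nat" and X Y :: "(nat \<Rightarrow> 'a) set"
  assumes phi: "bij_betw phi UNIV {..<CARD('a)}" and kn: "k < n" and l: "l \<le> n - k - 1"
    and v_zero: "\<forall>i\<in>{1..l}. vX n k X i = 0" and v_one: "vX n k X (l + 1) = 1"
    and Y: "Y \<in> full_set n k"
  shows "ext_less phi n k X Y \<longleftrightarrow>
         block_lex_greater phi k l (free_block n k (RE n k X)) (free_block n k (RE n k Y))"
proof -
  let ?x = "free_block n k (RE n k X)" and ?y = "free_block n k (RE n k Y)"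
  have vY: "vX n k Y i = 0" if "i \<in> {1..n - k}" for i using vX_full_set[OF less_imp_le[OF kn] Y that] .
  have differ: "ext_col_differ n k X Y j \<longleftrightarrow> ?x j \<noteq> ?y j"
    and less_iff: "extval phi n k X j < extval phi n k Y j \<longleftrightarrow>
                   column_value phi k (?x j) < column_value phi k (?y j)" if "j \<in> {1..l}" for j
  proof -
    have j: "j \<in> {1..n - k}" using that l by auto
    show "ext_col_differ n k X Y j \<longleftrightarrow> ?x j \<noteq> ?y j"
      by (rule ext_col_differ_iff_free_block[OF _ vY[OF j] j]) (use v_zero that in blast)
    show "extval phi n k X j < extval phi n k Y j \<longleftrightarrow>
          column_value phi k (?x j) < column_value phi k (?y j)"
      by (rule extval_less_iff_free_block[OF _ vY[OF j] j]) (use v_zero that in blast)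
  qed
  have "l + 1 \<in> {1..n - k}" using l kn by auto
  note last = ext_col_top_one_zero[OF phi v_one vY[OF this]]
  have "ext_less phi n k X Y \<longleftrightarrow>
    (\<exists>i\<in>{1..l}. ext_col_differ n k X Y i \<and> (\<forall>j\<in>{1..<i}. \<not> ext_col_differ n k X Y j) \<and>
                extval phi n k X i < extval phi n k Y i)"
    by (rule ext_less_iff_first_columns) (use last l kn in auto)
  also have "\<dots> \<longleftrightarrow> block_lex_greater phi k l ?x ?y"
    unfolding block_lex_greater_def
  proof (rule bex_cong[OF refl])
    fix i assume i: "i \<in> {1..l}"
    have "(\<forall>j\<in>{1..<i}. \<not> ext_col_differ n k X Y j) \<longleftrightarrow> (\<forall>j\<in>{1..<i}. ?y j = ?x j)"
    proof (rule ball_cong[OF refl])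
      fix j assume "j \<in> {1..<i}"
      hence "j \<in> {1..l}" using i by auto
      from differ[OF this] show "\<not> ext_col_differ n k X Y j \<longleftrightarrow> ?y j = ?x j" by metis
    qed
    moreover have "ext_col_differ n k X Y i" if "column_value phi k (?x i) < column_value phi k (?y i)"
      using that differ[OF i] by auto
    ultimately show "ext_col_differ n k X Y i \<and> (\<forall>j\<in>{1..<i}. \<not> ext_col_differ n k X Y j) \<and>
            extval phi n k X i < extval phi n k Y i \<longleftrightarrow>
          (\<forall>j\<in>{1..<i}. ?y j = ?x j) \<and> column_value phi k (?x i) < column_value phi k (?y i)"
      using less_iff[OF i] by blast
  qed
  finally show ?thesis .
qed

lemma card_full_set_ext_less:
  fixes phi :: "'a::{finite,field} \<Rightarrow> nat" and X :: "(nat \<Rightarrow> 'a) set"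
  assumes phi: "bij_betw phi UNIV {..<CARD('a)}" and kn: "k < n" and l: "l \<le> n - k - 1"
    and v_zero: "\<forall>i\<in>{1..l}. vX n k X i = 0" and v_one: "vX n k X (l + 1) = 1"
  shows "card {Y \<in> full_set n k. ext_less phi n k X Y} =
         (\<Sum>i=1..l. (CARD('a) ^ k - 1 - colval phi n k X i) * CARD('a) ^ (k * (n - k - i)))"
proof -
  let ?x = "free_block n k (RE n k X)"
  have "bij_betw (\<lambda>Y. free_block n k (RE n k Y)) {Y \<in> full_set n k. ext_less phi n k X Y}
      {A \<in> blocks (n - k) k. block_lex_greater phi k l ?x A}"
    using ext_less_full_set_iff[OF phi kn l v_zero v_one]
    by (intro bij_betw_Collect[OF bij_betw_full_set_blocks[OF kn]]) simp
  hence "card {Y \<in> full_set n k. ext_less phi n k X Y} =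
         card {A \<in> blocks (n - k) k. block_lex_greater phi k l ?x A}"
    by (rule bij_betw_same_card)
  also have "\<dots> = (\<Sum>i=1..l. (CARD('a) ^ k - 1 - column_value phi k (?x i)) * CARD('a) ^ (k * (n - k - i)))"
  proof (rule card_blocks_lex_greater[OF phi])
    show "\<forall>j\<in>{1..l}. ?x j \<in> (\<Pi>\<^sub>E t\<in>{1..k}. UNIV)"
      using free_block_in_blocks[of n k "RE n k X"] l unfolding blocks_def by auto
  qed (use l in auto)
  also have "\<dots> = (\<Sum>i=1..l. (CARD('a) ^ k - 1 - colval phi n k X i) * CARD('a) ^ (k * (n - k - i)))"
  proof (rule sum.cong[OF refl])
    fix i assume "i \<in> {1..l}"
    hence "i \<in> {1..n - k}" using l by auto
    thus "(CARD('a) ^ k - 1 - column_value phi k (?x i)) * CARD('a) ^ (k * (n - k - i)) =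
          (CARD('a) ^ k - 1 - colval phi n k X i) * CARD('a) ^ (k * (n - k - i))"
      by (simp add: colval_eq_column_value_free_block)
  qed
  finally show ?thesis .
qed

lemma of_nat_sum_diff_mult:
  assumes "\<forall>i\<in>A. c i < a"
  shows "int (\<Sum>i\<in>A. (a - 1 - c i) * p i) = (\<Sum>i\<in>A. (int a - 1 - int (c i)) * int (p i))"
  unfolding of_nat_sum
proof (rule sum.cong[OF refl])
  fix i assume "i \<in> A"
  hence "Suc (c i) \<le> a" using assms by (simp add: Suc_le_eq)
  thus "int ((a - 1 - c i) * p i) = (int a - 1 - int (c i)) * int (p i)" by (simp add: of_nat_diff)
qed

theorem lemma6:
  fixes phi :: "'a::{finite,field} \<Rightarrow> nat"
    and n k l :: nat
    and X :: "(nat \<Rightarrow> 'a) set"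
  assumes phi_bij: "bij_betw phi UNIV {..<CARD('a)}"
    and phi0: "phi 0 = 0" and phi1: "phi 1 = 1"
    and k_pos: "0 < k" and k_less: "k < n"
    and X_grass: "X \<in> grass n k"
    and X_notS: "X \<notin> full_set n k"
    and l_bound: "l \<le> n - k - 1"
    and v_zero: "\<forall>i\<in>{1..l}. vX n k X i = 0"
    and v_one: "vX n k X (l + 1) = 1"
  shows "int (card {Y \<in> full_set n k. ext_less phi n k X Y}) =
         (\<Sum>i=1..l. (int (CARD('a) ^ k) - 1 - int (colval phi n k X i))
                       * int (CARD('a) ^ (k * (n - k - i))))"
  unfolding card_full_set_ext_less[OF phi_bij k_less l_bound v_zero v_one]
  by (rule of_nat_sum_diff_mult) (simp add: colval_less[OF phi_bij])

end
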